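(* Let $S(T)\in\mathbb C[T]$ be a polynomial with constant term $1$, and let $P(T)=1+a_1T+a_2T^2+\cdots$ be its multiplicative inverse in the formal power series ring $\mathbb C[[T]]$. If there exists an integer $r>0$ such that $a_{mr}=0$ for all integers $m\ge1$, then $S(T)=1$. *)

theory Defs
  imports "HOL-Computational_Algebra.Computational_Algebra" Complex_Main
begin

end

theory Submission
  imports Defs "HOL-Analysis.Analysis"
begin

(*
  Let P = 1/S and let z be a primitive r-th root of unity.  Write f(cT) for the
  dilation f \<circ> (c T) of a power series.  Averaging P over the rotations T \<mapsto> z^k T
  kills every coefficient whose index is not a multiple of r; since by hypothesis
  P has no non-constant coefficient at a multiple of r, this gives
      \<Sum>k<r. P(z^k T) = r.
  With Q_k(T) = S(z^k T), a polynomial of the same degree d as S, and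
  P(z^k T) Q_k(T) = 1, multiplying by \<Prod>j<r. Q_j yields the polynomial identity
      \<Sum>k<r. \<Prod>j\<noteq>k. Q_j = r \<cdot> \<Prod>j<r. Q_j,
  whose left side has degree at most (r - 1) d and right side degree r d.
  Hence d = 0, i.e. S is the constant 1.
*)

lemma fps_compose_linear_inverse:
  fixes f :: "'a :: field fps"
  assumes "f $ 0 \<noteq> 0"
  shows "(inverse f oo (fps_const c * fps_X)) * (f oo (fps_const c * fps_X)) = 1"
proof -
  have "(inverse f oo (fps_const c * fps_X)) * (f oo (fps_const c * fps_X))
          = (inverse f * f) oo (fps_const c * fps_X)"
    by (simp add: fps_compose_mult_distrib)
  also have "inverse f * f = 1"
    using assms by (simp add: inverse_mult_eq_1)
  finally show ?thesis by simp
qed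

lemma fps_of_poly_pcompose_linear:
  fixes p :: "'a :: comm_ring_1 poly"
  shows "fps_of_poly (pcompose p [:0, c:]) = fps_of_poly p oo (fps_const c * fps_X)"
  by (rule fps_ext) (simp only: fps_nth_compose_linear coeff_pcompose_linear fps_of_poly_nth)

lemma roots_of_unity_power_sum:
  fixes r n :: nat
  assumes "r > 0"
  defines "z \<equiv> exp (2 * of_real pi * \<i> / of_nat r)"
  shows "(\<Sum>k<r. (z ^ k) ^ n) = (if r dvd n then of_nat r else 0)"
proof -
  have z_power: "z ^ m = exp (2 * of_real pi * \<i> * of_nat m / of_nat r)" for m
    unfolding z_def by (simp flip: exp_of_nat_mult add: field_simps)
  have z_power_eq_1: "z ^ m = 1 \<longleftrightarrow> r dvd m" for m
    using complex_root_unity_eq_1[of r m] assms(1) z_power[of m] by simp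
  have swap: "(\<Sum>k<r. (z ^ k) ^ n) = (\<Sum>k<r. (z ^ n) ^ k)"
    by (simp flip: power_mult add: mult.commute)
  show ?thesis
  proof (cases "r dvd n")
    case True
    then have "z ^ n = 1" using z_power_eq_1 by simp
    then show ?thesis using swap True by simp
  next
    case False
    have "(z ^ n) ^ r = (z ^ r) ^ n"
      by (simp flip: power_mult add: mult.commute)
    then have "(z ^ n) ^ r = 1"
      using z_power_eq_1[of r] by simp
    then show ?thesis
      using swap z_power_eq_1[of n] False by (simp add: geometric_sum)
  qed
qed

lemma sum_root_of_unity_dilations:
  fixes f :: "complex fps" and r :: nat
  assumes "r > 0"
  defines "z \<equiv> exp (2 * of_real pi * \<i> / of_nat r)"
  shows "(\<Sum>k<r. f oo (fps_const (z ^ k) * fps_X))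
           = fps_const (of_nat r) * Abs_fps (\<lambda>n. if r dvd n then f $ n else 0)"
proof (rule fps_ext)
  fix n
  have "(\<Sum>k<r. f oo (fps_const (z ^ k) * fps_X)) $ n = (\<Sum>k<r. (z ^ k) ^ n) * f $ n"
    by (simp only: fps_sum_nth fps_nth_compose_linear sum_distrib_right)
  also have "\<dots> = (if r dvd n then of_nat r else 0) * f $ n"
    using roots_of_unity_power_sum[OF assms(1)] unfolding z_def by simp
  finally show "(\<Sum>k<r. f oo (fps_const (z ^ k) * fps_X)) $ n
      = (fps_const (of_nat r) * Abs_fps (\<lambda>n. if r dvd n then f $ n else 0)) $ n"
    by simp
qed

lemma sum_inverses_times_prod:
  fixes u q :: "'b \<Rightarrow> 'a :: comm_ring_1"
  assumes "finite A" and "\<And>k. k \<in> A \<Longrightarrow> u k * q k = 1"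
  shows "(\<Sum>k\<in>A. u k) * (\<Prod>j\<in>A. q j) = (\<Sum>k\<in>A. \<Prod>j\<in>A - {k}. q j)"
  unfolding sum_distrib_right
proof (rule sum.cong)
  fix k assume k: "k \<in> A"
  have "u k * (\<Prod>j\<in>A. q j) = (u k * q k) * (\<Prod>j\<in>A - {k}. q j)"
    using k assms(1) by (simp add: prod.remove mult.assoc)
  then show "u k * (\<Prod>j\<in>A. q j) = (\<Prod>j\<in>A - {k}. q j)"
    using assms(2)[OF k] by simp
qed simp

text \<open>Degree count: for nonzero polynomials q_j of common degree d, the sum of the
  products omitting one factor has degree at most (|A| - 1) d, so it can equal a
  nonzero multiple of the full product (degree |A| d) only when d = 0.\<close>

lemma degree_zero_if_sum_of_cofactors_eq_prod:
  fixes q :: "'b \<Rightarrow> 'a :: idom poly"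
  assumes "finite A" and "A \<noteq> {}" and "c \<noteq> 0"
    and nonzero: "\<And>j. j \<in> A \<Longrightarrow> q j \<noteq> 0"
    and degree: "\<And>j. j \<in> A \<Longrightarrow> degree (q j) = d"
    and eq: "(\<Sum>k\<in>A. \<Prod>j\<in>A - {k}. q j) = smult c (\<Prod>j\<in>A. q j)"
  shows "d = 0"
proof -
  have "degree (smult c (\<Prod>j\<in>A. q j)) = card A * d"
    using assms by (simp add: degree_prod_eq_sum_degree)
  moreover have "degree (\<Sum>k\<in>A. \<Prod>j\<in>A - {k}. q j) \<le> (card A - 1) * d"
  proof (rule degree_sum_le)
    fix k assume k: "k \<in> A"
    have "degree (\<Prod>j\<in>A - {k}. q j) \<le> (\<Sum>j\<in>A - {k}. degree (q j))"
      using degree_prod_sum_le[of "A - {k}" q] assms(1) by (simp add: o_def)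
    also have "\<dots> = (card A - 1) * d"
      using k assms(1) degree by simp
    finally show "degree (\<Prod>j\<in>A - {k}. q j) \<le> (card A - 1) * d" .
  qed (rule assms(1))
  ultimately have "card A * d \<le> (card A - 1) * d"
    using eq by simp
  moreover have "card A > 0"
    using assms(1,2) by (simp add: card_gt_0_iff)
  ultimately show "d = 0"
    by (cases "card A") auto
qed

theorem theorem4p13:
  fixes S :: "complex poly" and r :: nat
  assumes "coeff S 0 = 1"
    and "r > 0"
    and "\<And>m. m \<ge> 1 \<Longrightarrow> fps_nth (inverse (fps_of_poly S)) (m * r) = 0"
  shows "S = 1"
proof -
  define z where "z = exp (2 * of_real pi * \<i> / of_nat r)"
  define P where "P = inverse (fps_of_poly S)"
  define D where "D = (\<lambda>k::nat. fps_const (z ^ k) * fps_X)"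
  define Q where "Q = (\<lambda>k::nat. pcompose S [:0, z ^ k:])"
  have inverse_Q: "(P oo D k) * fps_of_poly (Q k) = 1" for k
    using fps_compose_linear_inverse[of "fps_of_poly S"] assms(1)
    by (simp add: P_def D_def Q_def fps_of_poly_pcompose_linear)
  have "Abs_fps (\<lambda>n. if r dvd n then P $ n else 0) = 1"
    using assms(1,3) by (intro fps_ext) (auto simp: P_def mult.commute elim!: dvdE)
  then have sum_dilations: "(\<Sum>k<r. P oo D k) = fps_const (of_nat r)"
    using sum_root_of_unity_dilations[OF assms(2), of P] by (simp add: D_def z_def)
  have "fps_of_poly (\<Sum>k<r. \<Prod>j\<in>{..<r} - {k}. Q j)
          = fps_of_poly (smult (of_nat r) (\<Prod>j<r. Q j))"
    using sum_inverses_times_prod[of "{..<r}" "\<lambda>k. P oo D k" "\<lambda>j. fps_of_poly (Q j)"] inverse_Q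
    by (simp add: sum_dilations fps_of_poly_sum fps_of_poly_prod fps_of_poly_smult)
  then have "(\<Sum>k<r. \<Prod>j\<in>{..<r} - {k}. Q j) = smult (of_nat r) (\<Prod>j<r. Q j)"
    by (simp only: fps_of_poly_eq_iff)
  moreover have "z \<noteq> 0"
    by (simp add: z_def)
  moreover have "Q j \<noteq> 0" for j
  proof -
    have "coeff (Q j) 0 = 1"
      using assms(1) by (simp add: Q_def coeff_pcompose_linear poly_0_coeff_0)
    then show ?thesis by auto
  qed
  ultimately have "degree S = 0"
    using assms(2) by (intro degree_zero_if_sum_of_cofactors_eq_prod[of "{..<r}" "of_nat r" Q])
      (auto simp: Q_def degree_pcompose)
  then show "S = 1"
    using assms(1) by (metis coeff_pCons_0 degree_eq_zeroE one_pCons)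
qed

end
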